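(* Let $L:\mathcal{B}\to\mathcal{A}$ be left adjoint to $R:\mathcal{A}\to\mathcal{B}$ with unit $\eta$ and counit $\epsilon$. If $R$ is separable, then $(L,\epsilon L)$ is relatively projective as a right module functor on the monad $(RL,R\epsilon L,\eta)$.
   Context: For a right adjoint $R$, $R$ is separable iff there is a natural transformation $\sigma:\mathrm{Id}_{\mathcal{A}}\to LR$ with $\epsilon\circ\sigma=\mathrm{Id}$ (i.e. the counit is a split natural epimorphism). Given a monad $(Q,m,u)$ on $\mathcal{B}$, a right module functor on it is a pair $(W,\mu)$ with $W:\mathcal{B}\to\mathcal{A}$ a functor and $\mu:WQ\to W$ natural with $\mu\circ\mu Q=\mu\circ Wm$ and $\mu\circ Wu=\mathrm{Id}_W$. $(W,\mu)$ is relatively projective if there is a natural transformation $\gamma:W\to WQ$ with $\mu\circ\gamma=\mathrm{Id}_W$ and $Wm\circ\gamma Q=\gamma\circ\mu$. The pair $(L,\epsilon L)$ is a right module functor on $(RL,R\epsilon L,\eta)$. *)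

theory Defs
  imports Main
begin

record ('o,'m) cat =
  Ob  :: "'o set"
  Hom :: "'o \<Rightarrow> 'o \<Rightarrow> 'm set"
  cmp :: "'m \<Rightarrow> 'm \<Rightarrow> 'm"   (* cmp C g f = g \<circ> f *)
  ide :: "'o \<Rightarrow> 'm"

definition category :: "('o,'m) cat \<Rightarrow> bool" where
  "category C \<longleftrightarrow>
     (\<forall>x y. Hom C x y \<noteq> {} \<longrightarrow> x \<in> Ob C \<and> y \<in> Ob C) \<and>
     (\<forall>x\<in>Ob C. ide C x \<in> Hom C x x) \<and>
     (\<forall>x y z f g. f \<in> Hom C x y \<longrightarrow> g \<in> Hom C y z \<longrightarrow> cmp C g f \<in> Hom C x z) \<and>
     (\<forall>w x y z f g h. f \<in> Hom C w x \<longrightarrow> g \<in> Hom C x y \<longrightarrow> h \<in> Hom C y z \<longrightarrow>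
          cmp C h (cmp C g f) = cmp C (cmp C h g) f) \<and>
     (\<forall>x y f. f \<in> Hom C x y \<longrightarrow> cmp C (ide C y) f = f \<and> cmp C f (ide C x) = f)"

definition "functor" :: "('o,'m) cat \<Rightarrow> ('p,'n) cat \<Rightarrow> ('o \<Rightarrow> 'p) \<Rightarrow> ('m \<Rightarrow> 'n) \<Rightarrow> bool" where
  "functor C D Fo Fm \<longleftrightarrow>
     (\<forall>x\<in>Ob C. Fo x \<in> Ob D) \<and>
     (\<forall>x y f. f \<in> Hom C x y \<longrightarrow> Fm f \<in> Hom D (Fo x) (Fo y)) \<and>
     (\<forall>x\<in>Ob C. Fm (ide C x) = ide D (Fo x)) \<and>
     (\<forall>x y z f g. f \<in> Hom C x y \<longrightarrow> g \<in> Hom C y z \<longrightarrow> Fm (cmp C g f) = cmp D (Fm g) (Fm f))"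

definition nat_trans ::
  "('o,'m) cat \<Rightarrow> ('p,'n) cat \<Rightarrow> ('o \<Rightarrow> 'p) \<Rightarrow> ('m \<Rightarrow> 'n) \<Rightarrow> ('o \<Rightarrow> 'p) \<Rightarrow> ('m \<Rightarrow> 'n)
     \<Rightarrow> ('o \<Rightarrow> 'n) \<Rightarrow> bool" where
  "nat_trans C D Fo Fm Go Gm \<tau> \<longleftrightarrow>
     functor C D Fo Fm \<and> functor C D Go Gm \<and>
     (\<forall>x\<in>Ob C. \<tau> x \<in> Hom D (Fo x) (Go x)) \<and>
     (\<forall>x y f. f \<in> Hom C x y \<longrightarrow> cmp D (Gm f) (\<tau> x) = cmp D (\<tau> y) (Fm f))"

definition adjunction ::
  "('a,'am) cat \<Rightarrow> ('b,'bm) cat \<Rightarrow> ('b \<Rightarrow> 'a) \<Rightarrow> ('bm \<Rightarrow> 'am) \<Rightarrow> ('a \<Rightarrow> 'b) \<Rightarrow> ('am \<Rightarrow> 'bm)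
     \<Rightarrow> ('b \<Rightarrow> 'bm) \<Rightarrow> ('a \<Rightarrow> 'am) \<Rightarrow> bool" where
  "adjunction A B Lo Lm Ro Rm \<eta> \<epsilon> \<longleftrightarrow>
     category A \<and> category B \<and>
     functor B A Lo Lm \<and> functor A B Ro Rm \<and>
     nat_trans B B id id (Ro \<circ> Lo) (Rm \<circ> Lm) \<eta> \<and>
     nat_trans A A (Lo \<circ> Ro) (Lm \<circ> Rm) id id \<epsilon> \<and>
     (\<forall>b\<in>Ob B. cmp A (\<epsilon> (Lo b)) (Lm (\<eta> b)) = ide A (Lo b)) \<and>
     (\<forall>a\<in>Ob A. cmp B (Rm (\<epsilon> a)) (\<eta> (Ro a)) = ide B (Ro a))"

text \<open>Separable functor (Nastasescu--Van den Bergh--Van Oystaeyen):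
  \<open>F : C \<rightarrow> D\<close> is separable if there are maps
  \<open>P_{x,y} : Hom_D(Fx,Fy) \<rightarrow> Hom_C(x,y)\<close>, natural in \<open>x\<close> and \<open>y\<close>,
  with \<open>P_{x,y}(F f) = f\<close>.\<close>
definition separable :: "('o,'m) cat \<Rightarrow> ('p,'n) cat \<Rightarrow> ('o \<Rightarrow> 'p) \<Rightarrow> ('m \<Rightarrow> 'n) \<Rightarrow> bool" where
  "separable C D Fo Fm \<longleftrightarrow> functor C D Fo Fm \<and>
     (\<exists>P :: 'o \<Rightarrow> 'o \<Rightarrow> 'n \<Rightarrow> 'm.
        (\<forall>x\<in>Ob C. \<forall>y\<in>Ob C. \<forall>h \<in> Hom D (Fo x) (Fo y). P x y h \<in> Hom C x y) \<and>
        (\<forall>x y f. f \<in> Hom C x y \<longrightarrow> P x y (Fm f) = f) \<and>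
        (\<forall>x x' y y' f' g h. f' \<in> Hom C x' x \<longrightarrow> g \<in> Hom C y y' \<longrightarrow> h \<in> Hom D (Fo x) (Fo y) \<longrightarrow>
            P x' y' (cmp D (Fm g) (cmp D h (Fm f'))) = cmp C g (cmp C (P x y h) f')))"

definition monad :: "('b,'bm) cat \<Rightarrow> ('b \<Rightarrow> 'b) \<Rightarrow> ('bm \<Rightarrow> 'bm) \<Rightarrow> ('b \<Rightarrow> 'bm) \<Rightarrow> ('b \<Rightarrow> 'bm) \<Rightarrow> bool" where
  "monad B Qo Qm m u \<longleftrightarrow>
     category B \<and> functor B B Qo Qm \<and>
     nat_trans B B (Qo \<circ> Qo) (Qm \<circ> Qm) Qo Qm m \<and>
     nat_trans B B id id Qo Qm u \<and>
     (\<forall>b\<in>Ob B. cmp B (m b) (Qm (m b)) = cmp B (m b) (m (Qo b))) \<and>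
     (\<forall>b\<in>Ob B. cmp B (m b) (Qm (u b)) = ide B (Qo b)) \<and>
     (\<forall>b\<in>Ob B. cmp B (m b) (u (Qo b)) = ide B (Qo b))"

definition right_module_functor ::
  "('a,'am) cat \<Rightarrow> ('b,'bm) cat \<Rightarrow> ('b \<Rightarrow> 'b) \<Rightarrow> ('bm \<Rightarrow> 'bm) \<Rightarrow> ('b \<Rightarrow> 'bm) \<Rightarrow> ('b \<Rightarrow> 'bm)
     \<Rightarrow> ('b \<Rightarrow> 'a) \<Rightarrow> ('bm \<Rightarrow> 'am) \<Rightarrow> ('b \<Rightarrow> 'am) \<Rightarrow> bool" where
  "right_module_functor A B Qo Qm m u Wo Wm \<mu> \<longleftrightarrow>
     category A \<and> monad B Qo Qm m u \<and> functor B A Wo Wm \<and>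
     nat_trans B A (Wo \<circ> Qo) (Wm \<circ> Qm) Wo Wm \<mu> \<and>
     (\<forall>b\<in>Ob B. cmp A (\<mu> b) (\<mu> (Qo b)) = cmp A (\<mu> b) (Wm (m b))) \<and>
     (\<forall>b\<in>Ob B. cmp A (\<mu> b) (Wm (u b)) = ide A (Wo b))"

definition relatively_projective ::
  "('a,'am) cat \<Rightarrow> ('b,'bm) cat \<Rightarrow> ('b \<Rightarrow> 'b) \<Rightarrow> ('bm \<Rightarrow> 'bm) \<Rightarrow> ('b \<Rightarrow> 'bm) \<Rightarrow> ('b \<Rightarrow> 'bm)
     \<Rightarrow> ('b \<Rightarrow> 'a) \<Rightarrow> ('bm \<Rightarrow> 'am) \<Rightarrow> ('b \<Rightarrow> 'am) \<Rightarrow> bool" where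
  "relatively_projective A B Qo Qm m u Wo Wm \<mu> \<longleftrightarrow>
     right_module_functor A B Qo Qm m u Wo Wm \<mu> \<and>
     (\<exists>\<gamma>. nat_trans B A Wo Wm (Wo \<circ> Qo) (Wm \<circ> Qm) \<gamma> \<and>
          (\<forall>b\<in>Ob B. cmp A (\<mu> b) (\<gamma> b) = ide A (Wo b)) \<and>
          (\<forall>b\<in>Ob B. cmp A (Wm (m b)) (\<gamma> (Qo b)) = cmp A (\<gamma> b) (\<mu> b)))"

end

theory Submission
  imports Defs
begin

(* Let L -| R with unit eta and counit epsilon.
   (1) Any adjunction yields the monad (RL, R epsilon L, eta) on B, and
       (L, epsilon L) is a right module functor on it; both follow from
       naturality of epsilon and the triangle identities.
   (2) If the counit has a natural section sigma : Id_A => LR (epsilon o sigma = Id),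
       then gamma = sigma L exhibits (L, epsilon L) as relatively projective:
       epsilon L o sigma L = Id_L is the section property at L b, and
       LR epsilon L o sigma LRL = sigma L o epsilon L is naturality of sigma at
       the morphism epsilon (L b).
   (3) If R is separable with retraction maps P, then
       sigma a = P (eta (R a)) : a -> LR a is such a section (Rafael's theorem,
       the direction needed here): naturality of P turns the triangle identity
       R epsilon o eta R = Id and naturality of eta into the required equations. *)

lemma category_hom_obs:
  assumes "category C" "f \<in> Hom C x y" shows "x \<in> Ob C" "y \<in> Ob C"
  using assms unfolding category_def by blast+

lemma category_ide_hom:
  assumes "category C" "x \<in> Ob C" shows "ide C x \<in> Hom C x x"
  using assms unfolding category_def by blast

lemma category_comp_hom:
  assumes "category C" "f \<in> Hom C x y" "g \<in> Hom C y z" shows "cmp C g f \<in> Hom C x z"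
  using assms unfolding category_def by blast

lemma category_ide_left:
  assumes "category C" "f \<in> Hom C x y" shows "cmp C (ide C y) f = f"
  using assms unfolding category_def by blast

lemma category_ide_right:
  assumes "category C" "f \<in> Hom C x y" shows "cmp C f (ide C x) = f"
  using assms unfolding category_def by blast

lemma functor_ob:
  assumes "functor C D Fo Fm" "x \<in> Ob C" shows "Fo x \<in> Ob D"
  using assms unfolding functor_def by blast

lemma functor_hom:
  assumes "functor C D Fo Fm" "f \<in> Hom C x y" shows "Fm f \<in> Hom D (Fo x) (Fo y)"
  using assms unfolding functor_def by blast

lemma functor_ide:
  assumes "functor C D Fo Fm" "x \<in> Ob C" shows "Fm (ide C x) = ide D (Fo x)"
  using assms unfolding functor_def by blast

lemma functor_cmp:
  assumes "functor C D Fo Fm" "f \<in> Hom C x y" "g \<in> Hom C y z"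
  shows "Fm (cmp C g f) = cmp D (Fm g) (Fm f)"
  using assms unfolding functor_def by blast

lemma identity_functor: "category C \<Longrightarrow> functor C C id id"
  unfolding functor_def category_def by auto

lemma functor_compose:
  assumes F: "functor C D Fo Fm" and G: "functor D E Go Gm"
  shows "functor C E (Go \<circ> Fo) (Gm \<circ> Fm)"
  unfolding functor_def
proof (intro conjI allI ballI impI)
  fix x y z f g assume f: "f \<in> Hom C x y" and g: "g \<in> Hom C y z"
  show "(Gm \<circ> Fm) (cmp C g f) = cmp E ((Gm \<circ> Fm) g) ((Gm \<circ> Fm) f)"
    using functor_cmp[OF F f g] functor_cmp[OF G functor_hom[OF F f] functor_hom[OF F g]]
    by simp
qed (use functor_ob[OF F] functor_ob[OF G] functor_hom[OF F] functor_hom[OF G]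
       functor_ide[OF F] functor_ide[OF G] in auto)

lemma nat_transI:
  assumes "functor C D Fo Fm" "functor C D Go Gm"
    and "\<And>x. x \<in> Ob C \<Longrightarrow> \<tau> x \<in> Hom D (Fo x) (Go x)"
    and "\<And>x y f. f \<in> Hom C x y \<Longrightarrow> cmp D (Gm f) (\<tau> x) = cmp D (\<tau> y) (Fm f)"
  shows "nat_trans C D Fo Fm Go Gm \<tau>"
  using assms unfolding nat_trans_def by blast

lemma nat_trans_hom:
  assumes "nat_trans C D Fo Fm Go Gm \<tau>" "x \<in> Ob C" shows "\<tau> x \<in> Hom D (Fo x) (Go x)"
  using assms unfolding nat_trans_def by blast

lemma nat_trans_natural:
  assumes "nat_trans C D Fo Fm Go Gm \<tau>" "f \<in> Hom C x y"
  shows "cmp D (Gm f) (\<tau> x) = cmp D (\<tau> y) (Fm f)"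
  using assms unfolding nat_trans_def by blast

definition separability_retraction ::
  "('o,'m) cat \<Rightarrow> ('p,'n) cat \<Rightarrow> ('o \<Rightarrow> 'p) \<Rightarrow> ('m \<Rightarrow> 'n) \<Rightarrow> ('o \<Rightarrow> 'o \<Rightarrow> 'n \<Rightarrow> 'm) \<Rightarrow> bool"
  where
  "separability_retraction C D Fo Fm P \<longleftrightarrow>
     (\<forall>x\<in>Ob C. \<forall>y\<in>Ob C. \<forall>h \<in> Hom D (Fo x) (Fo y). P x y h \<in> Hom C x y) \<and>
     (\<forall>x y f. f \<in> Hom C x y \<longrightarrow> P x y (Fm f) = f) \<and>
     (\<forall>x x' y y' f' g h. f' \<in> Hom C x' x \<longrightarrow> g \<in> Hom C y y' \<longrightarrow> h \<in> Hom D (Fo x) (Fo y) \<longrightarrow>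
         P x' y' (cmp D (Fm g) (cmp D h (Fm f'))) = cmp C g (cmp C (P x y h) f'))"

lemma separable_retraction:
  assumes "separable C D Fo Fm" obtains P where "separability_retraction C D Fo Fm P"
  using assms unfolding separable_def separability_retraction_def by blast

lemma retraction_hom:
  "separability_retraction C D Fo Fm P \<Longrightarrow> x \<in> Ob C \<Longrightarrow> y \<in> Ob C \<Longrightarrow> h \<in> Hom D (Fo x) (Fo y)
     \<Longrightarrow> P x y h \<in> Hom C x y"
  and retraction_inverse:
  "separability_retraction C D Fo Fm P \<Longrightarrow> f \<in> Hom C x y \<Longrightarrow> P x y (Fm f) = f"
  and retraction_natural:
  "separability_retraction C D Fo Fm P \<Longrightarrow> f' \<in> Hom C x' x \<Longrightarrow> g \<in> Hom C y y'
     \<Longrightarrow> h \<in> Hom D (Fo x) (Fo y)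
     \<Longrightarrow> P x' y' (cmp D (Fm g) (cmp D h (Fm f'))) = cmp C g (cmp C (P x y h) f')"
  unfolding separability_retraction_def by blast+

locale adjoint_pair =
  fixes A :: "('a,'am) cat" and B :: "('b,'bm) cat"
    and Lo :: "'b \<Rightarrow> 'a" and Lm :: "'bm \<Rightarrow> 'am"
    and Ro :: "'a \<Rightarrow> 'b" and Rm :: "'am \<Rightarrow> 'bm"
    and \<eta> :: "'b \<Rightarrow> 'bm" and \<epsilon> :: "'a \<Rightarrow> 'am"
  assumes adjunction: "adjunction A B Lo Lm Ro Rm \<eta> \<epsilon>"
begin

lemma cat_A: "category A" and cat_B: "category B"
  and L_functor: "functor B A Lo Lm" and R_functor: "functor A B Ro Rm"
  and unit_nat: "nat_trans B B id id (Ro \<circ> Lo) (Rm \<circ> Lm) \<eta>"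
  and counit_nat: "nat_trans A A (Lo \<circ> Ro) (Lm \<circ> Rm) id id \<epsilon>"
  using adjunction unfolding adjunction_def by blast+

lemma triangle_L: "b \<in> Ob B \<Longrightarrow> cmp A (\<epsilon> (Lo b)) (Lm (\<eta> b)) = ide A (Lo b)"
  and triangle_R: "a \<in> Ob A \<Longrightarrow> cmp B (Rm (\<epsilon> a)) (\<eta> (Ro a)) = ide B (Ro a)"
  using adjunction unfolding adjunction_def by blast+

lemma unit_hom: "b \<in> Ob B \<Longrightarrow> \<eta> b \<in> Hom B b (Ro (Lo b))"
  using nat_trans_hom[OF unit_nat] by simp

lemma unit_natural: "f \<in> Hom B x y \<Longrightarrow> cmp B (Rm (Lm f)) (\<eta> x) = cmp B (\<eta> y) f"
  using nat_trans_natural[OF unit_nat] by simp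

lemma counit_hom: "a \<in> Ob A \<Longrightarrow> \<epsilon> a \<in> Hom A (Lo (Ro a)) a"
  using nat_trans_hom[OF counit_nat] by simp

lemma counit_natural: "f \<in> Hom A x y \<Longrightarrow> cmp A f (\<epsilon> x) = cmp A (\<epsilon> y) (Lm (Rm f))"
  using nat_trans_natural[OF counit_nat] by simp

lemma counit_L_hom: "b \<in> Ob B \<Longrightarrow> \<epsilon> (Lo b) \<in> Hom A (Lo (Ro (Lo b))) (Lo b)"
  using counit_hom functor_ob[OF L_functor] by blast

lemma RL_functor: "functor B B (Ro \<circ> Lo) (Rm \<circ> Lm)"
  by (rule functor_compose[OF L_functor R_functor])

lemma LRL_functor: "functor B A (Lo \<circ> (Ro \<circ> Lo)) (Lm \<circ> (Rm \<circ> Lm))"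
  by (rule functor_compose[OF RL_functor L_functor])

text \<open>The multiplication \<open>R\<epsilon>L : RLRL \<Rightarrow> RL\<close> is natural, by naturality of \<open>\<epsilon>\<close> at \<open>L f\<close>.\<close>
lemma multiplication_nat:
  "nat_trans B B ((Ro \<circ> Lo) \<circ> (Ro \<circ> Lo)) ((Rm \<circ> Lm) \<circ> (Rm \<circ> Lm)) (Ro \<circ> Lo) (Rm \<circ> Lm)
     (\<lambda>b. Rm (\<epsilon> (Lo b)))"
proof (rule nat_transI[OF functor_compose[OF RL_functor RL_functor] RL_functor])
  show "Rm (\<epsilon> (Lo b)) \<in> Hom B (((Ro \<circ> Lo) \<circ> (Ro \<circ> Lo)) b) ((Ro \<circ> Lo) b)" if "b \<in> Ob B" for b
    using functor_hom[OF R_functor counit_L_hom[OF that]] by simp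
next
  fix x y f assume f: "f \<in> Hom B x y"
  have Lf: "Lm f \<in> Hom A (Lo x) (Lo y)" using functor_hom[OF L_functor f] .
  have "Rm (cmp A (Lm f) (\<epsilon> (Lo x))) = Rm (cmp A (\<epsilon> (Lo y)) (Lm (Rm (Lm f))))"
    using counit_natural[OF Lf] by simp
  then show "cmp B ((Rm \<circ> Lm) f) (Rm (\<epsilon> (Lo x)))
           = cmp B (Rm (\<epsilon> (Lo y))) (((Rm \<circ> Lm) \<circ> (Rm \<circ> Lm)) f)"
    using functor_cmp[OF R_functor counit_hom[OF functor_ob[OF L_functor]] Lf]
      functor_cmp[OF R_functor functor_hom[OF L_functor functor_hom[OF R_functor Lf]]
        counit_L_hom] category_hom_obs[OF cat_B f]
    by simp
qed

lemma adjunction_monad: "monad B (Ro \<circ> Lo) (Rm \<circ> Lm) (\<lambda>b. Rm (\<epsilon> (Lo b))) \<eta>"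
  unfolding monad_def
proof (intro conjI ballI cat_B RL_functor multiplication_nat unit_nat)
  fix b assume b: "b \<in> Ob B"
  have e: "\<epsilon> (Lo b) \<in> Hom A (Lo (Ro (Lo b))) (Lo b)" using counit_L_hom[OF b] .
  have LRLb: "Lo (Ro (Lo b)) \<in> Ob A"
    using b functor_ob[OF L_functor] functor_ob[OF R_functor] by blast
  show "cmp B (Rm (\<epsilon> (Lo b))) ((Rm \<circ> Lm) (Rm (\<epsilon> (Lo b))))
      = cmp B (Rm (\<epsilon> (Lo b))) (Rm (\<epsilon> (Lo ((Ro \<circ> Lo) b))))"
    using functor_cmp[OF R_functor functor_hom[OF L_functor functor_hom[OF R_functor e]] e]
      functor_cmp[OF R_functor counit_hom[OF LRLb] e] counit_natural[OF e] by simp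
  show "cmp B (Rm (\<epsilon> (Lo b))) ((Rm \<circ> Lm) (\<eta> b)) = ide B ((Ro \<circ> Lo) b)"
    using functor_cmp[OF R_functor functor_hom[OF L_functor unit_hom[OF b]] e]
      triangle_L[OF b] functor_ide[OF R_functor functor_ob[OF L_functor b]] by simp
  show "cmp B (Rm (\<epsilon> (Lo b))) (\<eta> ((Ro \<circ> Lo) b)) = ide B ((Ro \<circ> Lo) b)"
    using triangle_R[OF functor_ob[OF L_functor b]] by simp
qed

lemma L_right_module:
  "right_module_functor A B (Ro \<circ> Lo) (Rm \<circ> Lm) (\<lambda>b. Rm (\<epsilon> (Lo b))) \<eta> Lo Lm (\<lambda>b. \<epsilon> (Lo b))"
  unfolding right_module_functor_def
proof (intro conjI ballI cat_A adjunction_monad L_functor)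
  show "nat_trans B A (Lo \<circ> (Ro \<circ> Lo)) (Lm \<circ> (Rm \<circ> Lm)) Lo Lm (\<lambda>b. \<epsilon> (Lo b))"
    by (rule nat_transI[OF LRL_functor L_functor])
      (use counit_L_hom counit_natural[OF functor_hom[OF L_functor]] in auto)
  show "cmp A (\<epsilon> (Lo b)) (\<epsilon> (Lo ((Ro \<circ> Lo) b))) = cmp A (\<epsilon> (Lo b)) (Lm (Rm (\<epsilon> (Lo b))))"
    if "b \<in> Ob B" for b
    using counit_natural[OF counit_L_hom[OF that]] by simp
  show "cmp A (\<epsilon> (Lo b)) (Lm (\<eta> b)) = ide A (Lo b)" if "b \<in> Ob B" for b
    using triangle_L[OF that] .
qed

text \<open>If \<open>\<sigma> : Id_A \<Rightarrow> LR\<close> splits the counit, then \<open>\<gamma> = \<sigma>L\<close> is the required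
  splitting of the action \<open>\<epsilon>L\<close>; its compatibility with the multiplication is
  naturality of \<open>\<sigma>\<close> at \<open>\<epsilon>(L b)\<close>.\<close>
lemma counit_section_relatively_projective:
  assumes \<sigma>_nat: "nat_trans A A id id (Lo \<circ> Ro) (Lm \<circ> Rm) \<sigma>"
    and \<sigma>_section: "\<And>a. a \<in> Ob A \<Longrightarrow> cmp A (\<epsilon> a) (\<sigma> a) = ide A a"
  shows "relatively_projective A B (Ro \<circ> Lo) (Rm \<circ> Lm) (\<lambda>b. Rm (\<epsilon> (Lo b))) \<eta>
           Lo Lm (\<lambda>b. \<epsilon> (Lo b))"
  unfolding relatively_projective_def
proof (intro conjI L_right_module exI[of _ "\<lambda>b. \<sigma> (Lo b)"] ballI)
  show "nat_trans B A Lo Lm (Lo \<circ> (Ro \<circ> Lo)) (Lm \<circ> (Rm \<circ> Lm)) (\<lambda>b. \<sigma> (Lo b))"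
    by (rule nat_transI[OF L_functor LRL_functor])
      (use nat_trans_hom[OF \<sigma>_nat functor_ob[OF L_functor]]
         nat_trans_natural[OF \<sigma>_nat functor_hom[OF L_functor]] in auto)
  show "cmp A (\<epsilon> (Lo b)) (\<sigma> (Lo b)) = ide A (Lo b)" if "b \<in> Ob B" for b
    using \<sigma>_section[OF functor_ob[OF L_functor that]] .
  show "cmp A (Lm (Rm (\<epsilon> (Lo b)))) (\<sigma> (Lo ((Ro \<circ> Lo) b))) = cmp A (\<sigma> (Lo b)) (\<epsilon> (Lo b))"
    if "b \<in> Ob B" for b
    using nat_trans_natural[OF \<sigma>_nat counit_L_hom[OF that]] by simp
qed

text \<open>Given retractions \<open>P\<close> for \<open>R\<close>, the maps \<open>\<sigma> a = P (\<eta> (R a)) : a \<rightarrow> LRa\<close>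
  form a natural section of the counit.\<close>
context
  fixes P :: "'a \<Rightarrow> 'a \<Rightarrow> 'bm \<Rightarrow> 'am"
  assumes P: "separability_retraction A B Ro Rm P"
begin

lemma unit_R_hom: "a \<in> Ob A \<Longrightarrow> \<eta> (Ro a) \<in> Hom B (Ro a) (Ro (Lo (Ro a)))"
  using unit_hom functor_ob[OF R_functor] by blast

lemma retracted_unit_hom: "a \<in> Ob A \<Longrightarrow> P a (Lo (Ro a)) (\<eta> (Ro a)) \<in> Hom A a (Lo (Ro a))"
  using retraction_hom[OF P _ _ unit_R_hom] functor_ob[OF L_functor] functor_ob[OF R_functor]
  by blast

text \<open>Section property: apply \<open>P\<close> to the triangle identity \<open>R\<epsilon> \<circ> \<eta>R = Id_R\<close>.\<close>
lemma retracted_unit_section: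
  assumes a: "a \<in> Ob A" shows "cmp A (\<epsilon> a) (P a (Lo (Ro a)) (\<eta> (Ro a))) = ide A a"
proof -
  have ida: "ide A a \<in> Hom A a a" using category_ide_hom[OF cat_A a] .
  have "cmp A (\<epsilon> a) (P a (Lo (Ro a)) (\<eta> (Ro a)))
      = cmp A (\<epsilon> a) (cmp A (P a (Lo (Ro a)) (\<eta> (Ro a))) (ide A a))"
    using category_ide_right[OF cat_A retracted_unit_hom[OF a]] by simp
  also have "\<dots> = P a a (cmp B (Rm (\<epsilon> a)) (cmp B (\<eta> (Ro a)) (Rm (ide A a))))"
    using retraction_natural[OF P ida counit_hom[OF a] unit_R_hom[OF a]] by simp
  also have "cmp B (Rm (\<epsilon> a)) (cmp B (\<eta> (Ro a)) (Rm (ide A a))) = Rm (ide A a)"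
    using functor_ide[OF R_functor a] category_ide_right[OF cat_B unit_R_hom[OF a]]
      triangle_R[OF a] by simp
  finally show ?thesis using retraction_inverse[OF P ida] by simp
qed

text \<open>Naturality: both sides are \<open>P\<close> applied to \<open>\<eta>(Ra') \<circ> R f = RLR f \<circ> \<eta>(R a)\<close>.\<close>
lemma retracted_unit_natural:
  assumes f: "f \<in> Hom A a a'"
  shows "cmp A (Lm (Rm f)) (P a (Lo (Ro a)) (\<eta> (Ro a)))
       = cmp A (P a' (Lo (Ro a')) (\<eta> (Ro a'))) f"
proof -
  have a: "a \<in> Ob A" and a': "a' \<in> Ob A" using category_hom_obs[OF cat_A f] by auto
  have Rf: "Rm f \<in> Hom B (Ro a) (Ro a')" using functor_hom[OF R_functor f] .
  have LRf: "Lm (Rm f) \<in> Hom A (Lo (Ro a)) (Lo (Ro a'))" using functor_hom[OF L_functor Rf] .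
  have LRa': "Lo (Ro a') \<in> Ob A" using functor_ob[OF L_functor functor_ob[OF R_functor a']] .
  have ida: "ide A a \<in> Hom A a a" and idLRa': "ide A (Lo (Ro a')) \<in> Hom A (Lo (Ro a')) (Lo (Ro a'))"
    using category_ide_hom[OF cat_A] a LRa' by blast+
  have "cmp A (Lm (Rm f)) (P a (Lo (Ro a)) (\<eta> (Ro a)))
      = cmp A (Lm (Rm f)) (cmp A (P a (Lo (Ro a)) (\<eta> (Ro a))) (ide A a))"
    using category_ide_right[OF cat_A retracted_unit_hom[OF a]] by simp
  also have "\<dots> = P a (Lo (Ro a')) (cmp B (Rm (Lm (Rm f))) (cmp B (\<eta> (Ro a)) (Rm (ide A a))))"
    using retraction_natural[OF P ida LRf unit_R_hom[OF a]] by simp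
  also have "cmp B (Rm (Lm (Rm f))) (cmp B (\<eta> (Ro a)) (Rm (ide A a))) = cmp B (\<eta> (Ro a')) (Rm f)"
    using functor_ide[OF R_functor a] category_ide_right[OF cat_B unit_R_hom[OF a]]
      unit_natural[OF Rf] by simp
  also have "\<dots> = cmp B (Rm (ide A (Lo (Ro a')))) (cmp B (\<eta> (Ro a')) (Rm f))"
    using functor_ide[OF R_functor LRa']
      category_ide_left[OF cat_B category_comp_hom[OF cat_B Rf unit_R_hom[OF a']]] by simp
  also have "P a (Lo (Ro a')) \<dots> = cmp A (ide A (Lo (Ro a'))) (cmp A (P a' (Lo (Ro a')) (\<eta> (Ro a'))) f)"
    using retraction_natural[OF P f idLRa' unit_R_hom[OF a']] .
  also have "\<dots> = cmp A (P a' (Lo (Ro a')) (\<eta> (Ro a'))) f"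
    using category_ide_left[OF cat_A category_comp_hom[OF cat_A f retracted_unit_hom[OF a']]] .
  finally show ?thesis .
qed

lemma retracted_unit_nat:
  "nat_trans A A id id (Lo \<circ> Ro) (Lm \<circ> Rm) (\<lambda>a. P a (Lo (Ro a)) (\<eta> (Ro a)))"
  by (rule nat_transI[OF identity_functor[OF cat_A] functor_compose[OF R_functor L_functor]])
    (use retracted_unit_hom retracted_unit_natural in auto)

end

end

theorem lemma1p15:
  fixes A :: "('a,'am) cat" and B :: "('b,'bm) cat"
    and Lo :: "'b \<Rightarrow> 'a" and Lm :: "'bm \<Rightarrow> 'am"
    and Ro :: "'a \<Rightarrow> 'b" and Rm :: "'am \<Rightarrow> 'bm"
    and \<eta> :: "'b \<Rightarrow> 'bm" and \<epsilon> :: "'a \<Rightarrow> 'am"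
  assumes "adjunction A B Lo Lm Ro Rm \<eta> \<epsilon>"
    and "separable A B Ro Rm"
  shows "relatively_projective A B (Ro \<circ> Lo) (Rm \<circ> Lm) (\<lambda>b. Rm (\<epsilon> (Lo b))) \<eta>
           Lo Lm (\<lambda>b. \<epsilon> (Lo b))"
proof -
  interpret adjoint_pair A B Lo Lm Ro Rm \<eta> \<epsilon> by standard (rule assms(1))
  obtain P where P: "separability_retraction A B Ro Rm P"
    using separable_retraction[OF assms(2)] .
  show ?thesis
    by (rule counit_section_relatively_projective[OF retracted_unit_nat[OF P]
          retracted_unit_section[OF P]])
qed

end
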